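(* Let $n\ge1$ and let $(\xi_i,\mathcal{F}_i)_{i=0,\dots,n}$ be a sequence of real-valued martingale differences on $(\Omega,\mathcal{F},\mathbf{P})$ with $\xi_0=0$, $\{\emptyset,\Omega\}=\mathcal{F}_0\subseteq\cdots\subseteq\mathcal{F}_n\subseteq\mathcal{F}$ and $\mathbf{E}[\xi_i\mid\mathcal{F}_{i-1}]=0$. Let $S_k=\sum_{i=1}^k\xi_i$ and $\langle S\rangle_n=\sum_{i=1}^n\mathbf{E}[\xi_i^2\mid\mathcal{F}_{i-1}]$. Let $p\ge2$ and $\delta>0$, and assume $\mathbf{E}[|\xi_i|^{p+\delta}]<\infty$ for all $i\in[1,n]$. Then for all $x,v>0$, $$\mathbf{P}\Big(\max_{1\le k\le n}S_k\ge x\Big)\le\exp\Bigg\{-\frac{x^2}{2\big(nv^2+\frac13x^{(2p+\delta)/(p+\delta)}\big)}\Bigg\}+\frac{1}{x^p}\sum_{i=1}^n\mathbf{E}\Big[|\xi_i|^{p+\delta}\mathbf{1}_{\{\xi_i>x^{p/(p+\delta)}\}}\Big]+\frac{1}{v^{p+\delta}}\mathbf{E}\Big[\Big|\frac{\langle S\rangle_n}{n}\Big|^{(p+\delta)/2}\Big].$$ Moreover, $$\mathbf{E}\Big[\Big|\frac{\langle S\rangle_n}{n}\Big|^{(p+\delta)/2}\Big]\le\frac1n\sum_{i=1}^n\mathbf{E}\big[|\xi_i|^{p+\delta}\big].$$ *)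

theory Defs
  imports "HOL-Probability.Probability"
begin

end

theory Submission
  imports Defs
begin

text \<open>On the event that every increment is at most y = x^(p/(p+\<delta>)) and the conditional
variance \<langle>S\<rangle>_n is at most n v^2, Freedman's exponential supermartingale argument, applied to the
increments truncated at y, yields the exponential term; it rests on the Bernstein-type bound
exp u \<le> 1 + u + u^2 / (2 (1 - \<lambda> y / 3)) for u \<le> \<lambda> y. The two complementary events are handled by
Markov's inequality for |\<xi>_i|^(p+\<delta>) and for |\<langle>S\<rangle>_n / n|^((p+\<delta>)/2), and the latter
moment is controlled by the conditional Jensen inequality and convexity of t \<mapsto> |t|^q.\<close>

lemma fact_ge_two_mult_three_power: "2 * 3 ^ k \<le> (fact (k + 2) :: real)"
proof (induction k)
  case 0
  then show ?case by (simp add: numeral_2_eq_2)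
next
  case (Suc k)
  have "fact (Suc k + 2) = real (k + 3) * fact (k + 2)"
    by (simp add: fact_Suc numeral_3_eq_3 numeral_2_eq_2 algebra_simps)
  also have "\<dots> \<ge> 3 * fact (k + 2)"
    by (intro mult_right_mono) auto
  finally have "3 * fact (k + 2) \<le> (fact (Suc k + 2) :: real)" .
  moreover have "2 * 3 ^ Suc k = 3 * (2 * 3 ^ k :: real)"
    by simp
  ultimately show ?case
    using Suc by linarith
qed

lemma exp_le_Bernstein_nonneg:
  fixes u :: real
  assumes "0 \<le> u" "u < 3"
  shows "exp u \<le> 1 + u + u\<^sup>2 / (2 * (1 - u / 3))"
proof -
  \<comment> \<open>Compare the exponential series termwise with 1 + u + (u^2/2) \<Sum>k. (u/3)^k.\<close>
  define b where "b k = (if k = 0 then 1 else if k = 1 then u else u\<^sup>2 / 2 * (u / 3) ^ (k - 2))"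
    for k :: nat
  have "(\<lambda>k. u\<^sup>2 / 2 * (u / 3) ^ k) sums (u\<^sup>2 / 2 * (1 / (1 - u / 3)))"
    using assms by (intro sums_mult geometric_sums) auto
  then have "(\<lambda>k. b (Suc (Suc k))) sums (u\<^sup>2 / 2 * (1 / (1 - u / 3)))"
    by (simp add: b_def)
  then have "(\<lambda>k. b (Suc k)) sums (u\<^sup>2 / 2 * (1 / (1 - u / 3)) + u)"
    by (subst (asm) sums_Suc_iff) (simp add: b_def)
  then have b_sums: "b sums (u\<^sup>2 / 2 * (1 / (1 - u / 3)) + u + 1)"
    by (subst (asm) sums_Suc_iff) (simp add: b_def)
  have exp_sums: "(\<lambda>k. u ^ k / fact k) sums exp u"
    using exp_converges[of u] by (simp add: divide_inverse_commute)
  have "u ^ k / fact k \<le> b k" for k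
  proof (cases "k \<ge> 2")
    case True
    then obtain j where k: "k = j + 2"
      by (metis add.commute le_add_diff_inverse)
    have "u ^ k / fact k \<le> u ^ k / (2 * 3 ^ j)"
      using assms fact_ge_two_mult_three_power[of j] unfolding k
      by (intro divide_left_mono) auto
    also have "\<dots> = b k"
      unfolding k b_def by (simp add: power_add power_divide power2_eq_square)
    finally show ?thesis .
  next
    case False
    then have "k = 0 \<or> k = 1" by auto
    then show ?thesis by (auto simp: b_def)
  qed
  then have "exp u \<le> u\<^sup>2 / 2 * (1 / (1 - u / 3)) + u + 1"
    by (intro sums_le[OF _ exp_sums b_sums]) auto
  then show ?thesis by simp
qed

lemma exp_le_quadratic_nonpos:
  fixes u :: real
  assumes "u \<le> 0"
  shows "exp u \<le> 1 + u + u\<^sup>2 / 2"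
proof -
  define f where "f t = 1 + t + t\<^sup>2 / 2 - exp t" for t :: real
  have "(f has_real_derivative (1 + t - exp t)) (at t)" for t
    unfolding f_def by (auto intro!: derivative_eq_intros simp: power2_eq_square)
  then have "f 0 \<le> f u"
    using exp_ge_add_one_self by (intro DERIV_nonpos_imp_nonincreasing[OF assms]) force
  then show ?thesis by (simp add: f_def)
qed

lemma exp_le_Bernstein:
  fixes u a :: real
  assumes "u \<le> a" "0 \<le> a" "a < 3"
  shows "exp u \<le> 1 + u + u\<^sup>2 / (2 * (1 - a / 3))"
proof (cases "u \<ge> 0")
  case True
  then have "exp u \<le> 1 + u + u\<^sup>2 / (2 * (1 - u / 3))"
    using assms by (intro exp_le_Bernstein_nonneg) auto
  also have "\<dots> \<le> 1 + u + u\<^sup>2 / (2 * (1 - a / 3))"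
    using assms True by (intro add_left_mono divide_left_mono) auto
  finally show ?thesis .
next
  case False
  then have "exp u \<le> 1 + u + u\<^sup>2 / 2"
    by (intro exp_le_quadratic_nonpos) auto
  also have "\<dots> \<le> 1 + u + u\<^sup>2 / (2 * (1 - a / 3))"
    using assms by (intro add_left_mono divide_left_mono) auto
  finally show ?thesis .
qed

lemma one_add_mult_le_exp_max:
  fixes a t :: real
  assumes "a \<ge> 0"
  shows "1 + a * t \<le> exp (a * max 0 t)"
proof -
  have "a * t \<le> a * max 0 t"
    using assms by (intro mult_left_mono) auto
  then show ?thesis
    using exp_ge_add_one_self[of "a * max 0 t"] by linarith
qed

text \<open>The witnesses minimize the exponent in Freedman's bound:
\<lambda> = x / D and g = \<lambda>^2 / (2 (1 - \<lambda> y / 3)) with D = V + x y / 3.\<close>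

lemma Bernstein_exponent:
  fixes x y V :: real
  assumes x: "x > 0" and y: "y > 0" and V: "V > 0"
  obtains lam g where "lam > 0" "g \<ge> 0"
    and "\<And>t. t \<le> y \<Longrightarrow> exp (lam * t) \<le> 1 + lam * t + g * t\<^sup>2"
    and "lam * x - g * V = x\<^sup>2 / (2 * (V + x * y / 3))"
proof -
  define D where "D = V + x * y / 3"
  define lam where "lam = x / D"
  define g where "g = lam\<^sup>2 / (2 * (1 - lam * y / 3))"
  have D: "D > 0"
    using x y V by (simp add: D_def add_pos_pos)
  have lam: "lam > 0"
    using x D by (simp add: lam_def)
  have one_minus: "1 - lam * y / 3 = V / D"
    using D by (simp add: lam_def D_def field_simps)
  moreover have "V / D > 0"
    using V D by simp
  ultimately have lam_y: "lam * y < 3"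
    by linarith
  have g: "g \<ge> 0"
    using lam_y by (simp add: g_def)
  show ?thesis
  proof (rule that[OF lam g])
    fix t
    assume "t \<le> y"
    then have "exp (lam * t) \<le> 1 + lam * t + (lam * t)\<^sup>2 / (2 * (1 - lam * y / 3))"
      using lam y lam_y by (intro exp_le_Bernstein) (auto intro: mult_left_mono)
    then show "exp (lam * t) \<le> 1 + lam * t + g * t\<^sup>2"
      by (simp add: g_def power_mult_distrib)
  next
    have "g = x\<^sup>2 / (2 * V * D)"
      using D V unfolding g_def one_minus by (simp add: lam_def field_simps power2_eq_square)
    then have "lam * x - g * V = x\<^sup>2 / (2 * D)"
      using D V by (simp add: lam_def field_simps power2_eq_square)
    then show "lam * x - g * V = x\<^sup>2 / (2 * (V + x * y / 3))"
      by (simp add: D_def)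
  qed
qed

lemma convex_combination_powr_le:
  fixes a b t r :: real
  assumes "r \<ge> 1" "0 \<le> a" "0 \<le> b" "0 < t" "t < 1"
  shows "((1 - t) * a + t * b) powr r \<le> (1 - t) * a powr r + t * b powr r"
proof (cases "a = 0 \<or> b = 0")
  case False
  then show ?thesis
    using convex_onD[OF powr_convex[OF assms(1)], of t a b] assms by auto
next
  case True
  then show ?thesis
  proof
    assume "a = 0"
    have "(t * b) powr r = t powr r * b powr r"
      using assms by (simp add: powr_mult)
    also have "\<dots> \<le> t * b powr r"
      using assms powr_le_one_le[of t r] by (intro mult_right_mono) auto
    finally show ?thesis
      using \<open>a = 0\<close> assms by simp
  next
    assume "b = 0"
    have "((1 - t) * a) powr r = (1 - t) powr r * a powr r"
      using assms by (simp add: powr_mult)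
    also have "\<dots> \<le> (1 - t) * a powr r"
      using assms powr_le_one_le[of "1 - t" r] by (intro mult_right_mono) auto
    finally show ?thesis
      using \<open>b = 0\<close> assms by simp
  qed
qed

lemma convex_on_abs_powr:
  assumes "r \<ge> 1"
  shows "convex_on UNIV (\<lambda>x::real. \<bar>x\<bar> powr r)"
proof (rule convex_onI)
  fix t x y :: real
  assume t: "0 < t" "t < 1"
  have "\<bar>(1 - t) *\<^sub>R x + t *\<^sub>R y\<bar> powr r \<le> ((1 - t) * \<bar>x\<bar> + t * \<bar>y\<bar>) powr r"
    using assms t
    by (intro powr_mono2) (auto intro: order.trans[OF abs_triangle_ineq] simp: abs_mult)
  also have "\<dots> \<le> (1 - t) * \<bar>x\<bar> powr r + t * \<bar>y\<bar> powr r"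
    using convex_combination_powr_le[OF assms _ _ t] by auto
  finally show "\<bar>(1 - t) *\<^sub>R x + t *\<^sub>R y\<bar> powr r \<le> (1 - t) * \<bar>x\<bar> powr r + t * \<bar>y\<bar> powr r" .
qed auto

lemma abs_mean_powr_le:
  fixes a :: "'b \<Rightarrow> real"
  assumes "finite I" "I \<noteq> {}" "q \<ge> 1"
  shows "\<bar>(\<Sum>i\<in>I. a i) / real (card I)\<bar> powr q \<le> (\<Sum>i\<in>I. \<bar>a i\<bar> powr q) / real (card I)"
proof -
  have "\<bar>\<Sum>i\<in>I. (1 / real (card I)) *\<^sub>R a i\<bar> powr q \<le> (\<Sum>i\<in>I. (1 / real (card I)) * \<bar>a i\<bar> powr q)"
    using assms convex_on_abs_powr
    by (intro convex_on_sum[where C = UNIV and f = "\<lambda>t. \<bar>t\<bar> powr q"]) auto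
  then show ?thesis
    by (simp add: sum_divide_distrib)
qed

lemma abs_power2_powr: "\<bar>(x::real)\<^sup>2\<bar> powr q = \<bar>x\<bar> powr (2 * q)"
proof -
  have "\<bar>x\<^sup>2\<bar> = \<bar>x\<bar> powr 2"
    by (cases "x = 0") (auto simp: powr_realpow[symmetric] power_abs)
  then have "\<bar>x\<^sup>2\<bar> powr q = (\<bar>x\<bar> powr 2) powr q"
    by simp
  also have "\<dots> = \<bar>x\<bar> powr (2 * q)"
    by (rule powr_powr)
  finally show ?thesis .
qed

lemma integrable_bounded_mult:
  fixes f h :: "'a \<Rightarrow> real"
  assumes "integrable M f" "h \<in> borel_measurable M" "\<And>\<omega>. \<omega> \<in> space M \<Longrightarrow> \<bar>h \<omega>\<bar> \<le> B"
  shows "integrable M (\<lambda>\<omega>. h \<omega> * f \<omega>)"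
proof (rule Bochner_Integration.integrable_bound[where f = "\<lambda>\<omega>. B * f \<omega>"])
  show "integrable M (\<lambda>\<omega>. B * f \<omega>)"
    using assms by auto
  show "(\<lambda>\<omega>. h \<omega> * f \<omega>) \<in> borel_measurable M"
    using assms borel_measurable_integrable by measurable
  show "AE \<omega> in M. norm (h \<omega> * f \<omega>) \<le> norm (B * f \<omega>)"
  proof (rule AE_I2)
    fix \<omega>
    assume \<omega>: "\<omega> \<in> space M"
    then have "0 \<le> B"
      using assms(3) by (meson abs_ge_zero order_trans)
    then show "norm (h \<omega> * f \<omega>) \<le> norm (B * f \<omega>)"
      using assms(3)[OF \<omega>] by (auto simp: abs_mult intro: mult_right_mono)
  qed
qed

lemma (in finite_measure) integrable_power2_if_integrable_abs_powr:
  fixes f :: "'a \<Rightarrow> real"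
  assumes [measurable]: "f \<in> borel_measurable M"
    and "r \<ge> 2" "integrable M (\<lambda>\<omega>. \<bar>f \<omega>\<bar> powr r)"
  shows "integrable M (\<lambda>\<omega>. (f \<omega>)\<^sup>2)"
proof (rule Bochner_Integration.integrable_bound[where f = "\<lambda>\<omega>. 1 + \<bar>f \<omega>\<bar> powr r"])
  show "integrable M (\<lambda>\<omega>. 1 + \<bar>f \<omega>\<bar> powr r)"
    using assms by auto
  have "(f \<omega>)\<^sup>2 \<le> 1 + \<bar>f \<omega>\<bar> powr r" for \<omega>
  proof (cases "\<bar>f \<omega>\<bar> \<le> 1")
    case True
    then have "(f \<omega>)\<^sup>2 \<le> 1"
      by (simp add: abs_square_le_1)
    then show ?thesis
      by (smt (verit) powr_ge_zero)
  next
    case False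
    then have "(f \<omega>)\<^sup>2 = \<bar>f \<omega>\<bar> powr 2"
      by (simp add: powr_realpow[symmetric] power_abs)
    also have "\<dots> \<le> \<bar>f \<omega>\<bar> powr r"
      using False assms by (intro powr_mono) auto
    finally show ?thesis by simp
  qed
  then show "AE \<omega> in M. norm ((f \<omega>)\<^sup>2) \<le> norm (1 + \<bar>f \<omega>\<bar> powr r)"
    by (intro AE_I2) simp
qed measurable

lemma (in finite_measure) measure_ge_le_abs_powr_integral:
  fixes f :: "'a \<Rightarrow> real"
  assumes [measurable]: "f \<in> borel_measurable M"
    and a: "a > 0" and q: "q > 0" and "integrable M (\<lambda>\<omega>. \<bar>f \<omega>\<bar> powr q)"
  shows "measure M {\<omega> \<in> space M. a \<le> f \<omega>} \<le> (\<integral>\<omega>. \<bar>f \<omega>\<bar> powr q \<partial>M) / a powr q"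
proof -
  have "a powr q \<le> \<bar>f \<omega>\<bar> powr q" if "a \<le> f \<omega>" for \<omega>
    using that a q by (intro powr_mono2) auto
  then have "measure M {\<omega> \<in> space M. a \<le> f \<omega>} \<le> measure M {\<omega> \<in> space M. a powr q \<le> \<bar>f \<omega>\<bar> powr q}"
    by (intro finite_measure_mono) (auto, measurable)
  also have "\<dots> \<le> (\<integral>\<omega>. \<bar>f \<omega>\<bar> powr q \<partial>M) / a powr q"
    by (rule integral_Markov_inequality_measure[OF assms(4) sets.top]) (use a in auto)
  finally show ?thesis .
qed

lemma (in finite_measure) measure_gt_le_tail_moment:
  fixes f :: "'a \<Rightarrow> real"
  assumes [measurable]: "f \<in> borel_measurable M"
    and y: "y > 0" and r: "r > 0" and "integrable M (\<lambda>\<omega>. \<bar>f \<omega>\<bar> powr r)"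
  shows "measure M {\<omega> \<in> space M. y < f \<omega>}
    \<le> (\<integral>\<omega>. \<bar>f \<omega>\<bar> powr r * indicator {\<omega>. y < f \<omega>} \<omega> \<partial>M) / y powr r"
proof -
  define u where "u \<omega> = \<bar>f \<omega>\<bar> powr r * indicator {\<omega>. y < f \<omega>} \<omega>" for \<omega>
  have u_eq: "u = (\<lambda>\<omega>. \<bar>f \<omega>\<bar> powr r * (if y < f \<omega> then 1 else 0))"
    by (auto simp: u_def fun_eq_iff)
  have [measurable]: "u \<in> borel_measurable M"
    unfolding u_eq by measurable
  have "integrable M u"
  proof (rule Bochner_Integration.integrable_bound[OF assms(4)])
    show "AE \<omega> in M. norm (u \<omega>) \<le> norm (\<bar>f \<omega>\<bar> powr r)"
      by (intro AE_I2) (simp add: u_def indicator_def)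
  qed measurable
  have "y powr r \<le> u \<omega>" if "y < f \<omega>" for \<omega>
    using that y r by (simp add: u_def powr_mono2)
  then have "measure M {\<omega> \<in> space M. y < f \<omega>} \<le> measure M {\<omega> \<in> space M. y powr r \<le> u \<omega>}"
    by (intro finite_measure_mono) (auto, measurable)
  also have "\<dots> \<le> (\<integral>\<omega>. u \<omega> \<partial>M) / y powr r"
    by (rule integral_Markov_inequality_measure[OF \<open>integrable M u\<close> sets.top])
      (use y in \<open>auto simp: u_def\<close>)
  finally show ?thesis
    by (simp add: u_def)
qed

locale martingale_difference_sequence = prob_space M for M :: "'a measure" +
  fixes F :: "nat \<Rightarrow> 'a measure" and \<xi> :: "nat \<Rightarrow> 'a \<Rightarrow> real" and n :: nat
  assumes subalgebra_filtration: "\<And>i. i \<le> n \<Longrightarrow> subalgebra M (F i)"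
    and filtration_mono: "\<And>i. i < n \<Longrightarrow> sets (F i) \<subseteq> sets (F (Suc i))"
    and adapted: "\<And>i. i \<le> n \<Longrightarrow> \<xi> i \<in> borel_measurable (F i)"
    and integrable_\<xi>: "\<And>i. i \<le> n \<Longrightarrow> integrable M (\<xi> i)"
    and integrable_\<xi>_square: "\<And>i. 1 \<le> i \<Longrightarrow> i \<le> n \<Longrightarrow> integrable M (\<lambda>\<omega>. (\<xi> i \<omega>)\<^sup>2)"
    and cond_exp_\<xi>: "\<And>i. 1 \<le> i \<Longrightarrow> i \<le> n \<Longrightarrow>
      AE \<omega> in M. real_cond_exp M (F (i - 1)) (\<xi> i) \<omega> = 0"
begin

lemma space_filtration: "i \<le> n \<Longrightarrow> space (F i) = space M"
  using subalgebra_filtration[of i] by (simp add: subalgebra_def)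

lemma sets_filtration_mono: "i \<le> k \<Longrightarrow> k \<le> n \<Longrightarrow> sets (F i) \<subseteq> sets (F k)"
proof (induction k rule: dec_induct)
  case (step k)
  then show ?case
    using filtration_mono[of k] by auto
qed simp

lemma measurable_filtration_mono:
  "i \<le> k \<Longrightarrow> k \<le> n \<Longrightarrow> f \<in> borel_measurable (F i) \<Longrightarrow> f \<in> borel_measurable (F k)"
  by (rule measurable_from_subalg[of "F k" "F i"])
    (auto simp: subalgebra_def sets_filtration_mono space_filtration)

lemma measurable_from_filtration: "i \<le> n \<Longrightarrow> f \<in> borel_measurable (F i) \<Longrightarrow> f \<in> borel_measurable M"
  by (rule measurable_from_subalg[OF subalgebra_filtration])

lemma sets_from_filtration: "i \<le> n \<Longrightarrow> A \<in> sets (F i) \<Longrightarrow> A \<in> sets M"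
  using subalgebra_filtration by (auto simp: subalgebra_def)

lemma sigma_finite_subalgebra_filtration: "i \<le> n \<Longrightarrow> sigma_finite_subalgebra M (F i)"
  by (intro finite_measure_subalgebra_is_sigma_finite)
    (simp add: finite_measure_subalgebra_def finite_measure_subalgebra_axioms_def
      subalgebra_filtration finite_measure_axioms)

lemma borel_measurable_\<xi>: "i \<le> n \<Longrightarrow> \<xi> i \<in> borel_measurable M"
  using measurable_from_filtration adapted by blast

definition cond_var :: "nat \<Rightarrow> 'a \<Rightarrow> real" where
  "cond_var i = real_cond_exp M (F (i - 1)) (\<lambda>\<omega>. (\<xi> i \<omega>)\<^sup>2)"

lemma cond_var_measurable: "cond_var i \<in> borel_measurable (F (i - 1))"
  by (simp add: cond_var_def)

lemma integrable_cond_var: "1 \<le> i \<Longrightarrow> i \<le> n \<Longrightarrow> integrable M (cond_var i)"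
  unfolding cond_var_def
  by (rule sigma_finite_subalgebra.real_cond_exp_int(1)[OF sigma_finite_subalgebra_filtration
        integrable_\<xi>_square]) auto

lemma borel_measurable_cond_var: "1 \<le> i \<Longrightarrow> i \<le> n \<Longrightarrow> cond_var i \<in> borel_measurable M"
  using integrable_cond_var by blast

lemma AE_cond_var_nonneg: "1 \<le> i \<Longrightarrow> i \<le> n \<Longrightarrow> AE \<omega> in M. 0 \<le> cond_var i \<omega>"
  unfolding cond_var_def
  by (rule sigma_finite_subalgebra.real_cond_exp_pos[OF sigma_finite_subalgebra_filtration])
    (auto intro: borel_measurable_power borel_measurable_\<xi>)

lemma AE_abs_cond_var_powr_le:
  assumes i: "1 \<le> i" "i \<le> n" and q: "q \<ge> 1"
    and moment: "integrable M (\<lambda>\<omega>. \<bar>\<xi> i \<omega>\<bar> powr (2 * q))"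
  shows "AE \<omega> in M. \<bar>cond_var i \<omega>\<bar> powr q
    \<le> real_cond_exp M (F (i - 1)) (\<lambda>\<omega>. \<bar>\<xi> i \<omega>\<bar> powr (2 * q)) \<omega>"
proof -
  have powr_eq: "(\<lambda>\<omega>. \<bar>(\<xi> i \<omega>)\<^sup>2\<bar> powr q) = (\<lambda>\<omega>. \<bar>\<xi> i \<omega>\<bar> powr (2 * q))"
    by (simp only: abs_power2_powr)
  have "AE \<omega> in M. \<bar>real_cond_exp M (F (i - 1)) (\<lambda>\<omega>. (\<xi> i \<omega>)\<^sup>2) \<omega>\<bar> powr q
      \<le> real_cond_exp M (F (i - 1)) (\<lambda>\<omega>. \<bar>(\<xi> i \<omega>)\<^sup>2\<bar> powr q) \<omega>"
  proof (rule sigma_finite_subalgebra.real_cond_exp_jensens_inequality(2)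
      [OF sigma_finite_subalgebra_filtration, where I = UNIV])
    show "integrable M (\<lambda>\<omega>. (\<xi> i \<omega>)\<^sup>2)"
      using integrable_\<xi>_square[OF i] .
    show "integrable M (\<lambda>\<omega>. \<bar>(\<xi> i \<omega>)\<^sup>2\<bar> powr q)"
      unfolding powr_eq using moment .
    show "convex_on UNIV (\<lambda>t::real. \<bar>t\<bar> powr q)"
      using convex_on_abs_powr q by auto
  qed (use i in auto)
  then show ?thesis
    unfolding cond_var_def powr_eq .
qed

lemma cond_var_mean_moment:
  assumes n: "n \<ge> 1" and q: "q \<ge> 1"
    and moment: "\<And>i. 1 \<le> i \<Longrightarrow> i \<le> n \<Longrightarrow> integrable M (\<lambda>\<omega>. \<bar>\<xi> i \<omega>\<bar> powr (2 * q))"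
  shows integrable_cond_var_mean_powr:
      "integrable M (\<lambda>\<omega>. \<bar>(\<Sum>i=1..n. cond_var i \<omega>) / real n\<bar> powr q)"
    and integral_cond_var_mean_powr_le:
      "(\<integral>\<omega>. \<bar>(\<Sum>i=1..n. cond_var i \<omega>) / real n\<bar> powr q \<partial>M)
        \<le> (1 / real n) * (\<Sum>i=1..n. \<integral>\<omega>. \<bar>\<xi> i \<omega>\<bar> powr (2 * q) \<partial>M)"
proof -
  define e where "e i = real_cond_exp M (F (i - 1)) (\<lambda>\<omega>. \<bar>\<xi> i \<omega>\<bar> powr (2 * q))" for i
  have e: "integrable M (e i)" "(\<integral>\<omega>. e i \<omega> \<partial>M) = (\<integral>\<omega>. \<bar>\<xi> i \<omega>\<bar> powr (2 * q) \<partial>M)"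
    if "i \<in> {1..n}" for i
    unfolding e_def
    using sigma_finite_subalgebra.real_cond_exp_int[OF sigma_finite_subalgebra_filtration moment, of "i - 1" i]
      that by auto
  define R where "R \<omega> = (\<Sum>i=1..n. e i \<omega>) / real n" for \<omega>
  have "integrable M R"
    unfolding R_def using e by (intro integrable_divide_zero Bochner_Integration.integrable_sum) auto
  have integral_R: "(\<integral>\<omega>. R \<omega> \<partial>M) = (1 / real n) * (\<Sum>i=1..n. \<integral>\<omega>. \<bar>\<xi> i \<omega>\<bar> powr (2 * q) \<partial>M)"
    unfolding R_def using e by (simp add: integral_sum)
  have "AE \<omega> in M. \<forall>i\<in>{1..n}. \<bar>cond_var i \<omega>\<bar> powr q \<le> e i \<omega>"
    unfolding e_def using AE_abs_cond_var_powr_le q moment by (intro AE_finite_allI) auto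
  then have AE_le: "AE \<omega> in M. \<bar>(\<Sum>i=1..n. cond_var i \<omega>) / real n\<bar> powr q \<le> R \<omega>"
  proof (rule AE_mp, intro AE_I2 impI)
    fix \<omega>
    assume "\<forall>i\<in>{1..n}. \<bar>cond_var i \<omega>\<bar> powr q \<le> e i \<omega>"
    then have "(\<Sum>i=1..n. \<bar>cond_var i \<omega>\<bar> powr q) / real n \<le> R \<omega>"
      unfolding R_def by (intro divide_right_mono sum_mono) auto
    then show "\<bar>(\<Sum>i=1..n. cond_var i \<omega>) / real n\<bar> powr q \<le> R \<omega>"
      using abs_mean_powr_le[of "{1..n}" q "\<lambda>i. cond_var i \<omega>"] n q by simp
  qed
  have [measurable]: "cond_var i \<in> borel_measurable M" if "i \<in> {1..n}" for i
    using borel_measurable_cond_var that by auto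
  show integrable: "integrable M (\<lambda>\<omega>. \<bar>(\<Sum>i=1..n. cond_var i \<omega>) / real n\<bar> powr q)"
    by (rule Bochner_Integration.integrable_bound[OF \<open>integrable M R\<close>])
      (use AE_le in \<open>auto elim!: AE_mp\<close>)
  show "(\<integral>\<omega>. \<bar>(\<Sum>i=1..n. cond_var i \<omega>) / real n\<bar> powr q \<partial>M)
      \<le> (1 / real n) * (\<Sum>i=1..n. \<integral>\<omega>. \<bar>\<xi> i \<omega>\<bar> powr (2 * q) \<partial>M)"
    using integral_mono_AE[OF integrable \<open>integrable M R\<close> AE_le] integral_R by simp
qed

lemma integral_mult_quadratic_\<xi>_Suc:
  assumes m: "m < n" and [measurable]: "h \<in> borel_measurable (F m)"
    and h_bound: "\<And>\<omega>. \<omega> \<in> space M \<Longrightarrow> \<bar>h \<omega>\<bar> \<le> B"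
  shows "(\<integral>\<omega>. h \<omega> * (1 + a * \<xi> (Suc m) \<omega> + b * (\<xi> (Suc m) \<omega>)\<^sup>2) \<partial>M)
    = (\<integral>\<omega>. h \<omega> * (1 + b * cond_var (Suc m) \<omega>) \<partial>M)"
proof -
  have sf: "sigma_finite_subalgebra M (F m)"
    using sigma_finite_subalgebra_filtration m by simp
  have [measurable]: "h \<in> borel_measurable M" "\<xi> (Suc m) \<in> borel_measurable M"
    using measurable_from_filtration[OF _ assms(2)] borel_measurable_\<xi> m by auto
  have int: "integrable M (\<lambda>\<omega>. h \<omega> * f \<omega>)" if "integrable M f" for f
    using that h_bound by (intro integrable_bounded_mult) auto
  have int_\<xi>: "integrable M (\<lambda>\<omega>. h \<omega> * \<xi> (Suc m) \<omega>)"
    and int_\<xi>2: "integrable M (\<lambda>\<omega>. h \<omega> * (\<xi> (Suc m) \<omega>)\<^sup>2)"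
    and int_cv: "integrable M (\<lambda>\<omega>. h \<omega> * cond_var (Suc m) \<omega>)"
    and int_1: "integrable M h"
    using int[of "\<xi> (Suc m)"] int[of "\<lambda>\<omega>. (\<xi> (Suc m) \<omega>)\<^sup>2"] int[of "cond_var (Suc m)"] int[of "\<lambda>_. 1"]
      integrable_\<xi> integrable_\<xi>_square integrable_cond_var m by auto
  have "(\<integral>\<omega>. h \<omega> * \<xi> (Suc m) \<omega> \<partial>M) = (\<integral>\<omega>. h \<omega> * real_cond_exp M (F m) (\<xi> (Suc m)) \<omega> \<partial>M)"
    by (rule sigma_finite_subalgebra.real_cond_exp_intg(2)[OF sf int_\<xi>, symmetric]) measurable
  also have "\<dots> = 0"
    using cond_exp_\<xi>[of "Suc m"] m by (subst integral_eq_zero_AE) auto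
  finally have mean_0: "(\<integral>\<omega>. h \<omega> * \<xi> (Suc m) \<omega> \<partial>M) = 0" .
  have var: "(\<integral>\<omega>. h \<omega> * (\<xi> (Suc m) \<omega>)\<^sup>2 \<partial>M) = (\<integral>\<omega>. h \<omega> * cond_var (Suc m) \<omega> \<partial>M)"
    unfolding cond_var_def diff_Suc_1
    by (rule sigma_finite_subalgebra.real_cond_exp_intg(2)[OF sf int_\<xi>2, symmetric]) simp_all
  show ?thesis
    using int_\<xi> int_\<xi>2 int_cv int_1 mean_0 var by (simp add: algebra_simps)
qed

definition Freedman_event :: "real \<Rightarrow> real \<Rightarrow> real \<Rightarrow> 'a set" where
  "Freedman_event x y V = {\<omega> \<in> space M. (\<exists>k\<in>{1..n}. x \<le> (\<Sum>i=1..k. \<xi> i \<omega>))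
    \<and> (\<forall>i\<in>{1..n}. \<xi> i \<omega> \<le> y) \<and> (\<Sum>i=1..n. cond_var i \<omega>) \<le> V}"

lemma sets_Freedman_event: "Freedman_event x y V \<in> sets M"
proof -
  have [measurable]: "(\<lambda>\<omega>. \<Sum>i=1..n. cond_var i \<omega>) \<in> borel_measurable M"
    by (intro borel_measurable_sum) (auto intro: borel_measurable_cond_var)
  have "Measurable.pred M (\<lambda>\<omega>. \<exists>k\<in>{1..n}. x \<le> (\<Sum>i=1..k. \<xi> i \<omega>))"
  proof (rule pred_intros_finite)
    fix k
    assume "k \<in> {1..n}"
    then have [measurable]: "(\<lambda>\<omega>. \<Sum>i=1..k. \<xi> i \<omega>) \<in> borel_measurable M"
      by (intro borel_measurable_sum) (auto intro: borel_measurable_\<xi>)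
    show "Measurable.pred M (\<lambda>\<omega>. x \<le> (\<Sum>i=1..k. \<xi> i \<omega>))"
      by measurable
  qed simp
  moreover have "Measurable.pred M (\<lambda>\<omega>. \<forall>i\<in>{1..n}. \<xi> i \<omega> \<le> y)"
  proof (rule pred_intros_finite)
    fix i
    assume "i \<in> {1..n}"
    then have [measurable]: "\<xi> i \<in> borel_measurable M"
      using borel_measurable_\<xi> by simp
    show "Measurable.pred M (\<lambda>\<omega>. \<xi> i \<omega> \<le> y)"
      by measurable
  qed simp
  ultimately show ?thesis
    unfolding Freedman_event_def pred_def[symmetric] by measurable
qed

context
  fixes Z :: "nat \<Rightarrow> 'a \<Rightarrow> real" and c :: real
  assumes c: "c > 0"
    and adapted_Z: "\<And>k. k \<le> n \<Longrightarrow> Z k \<in> borel_measurable (F k)"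
    and Z_nonneg: "\<And>k \<omega>. 0 \<le> Z k \<omega>"
    and integrable_Z: "\<And>k. k \<le> n \<Longrightarrow> integrable M (Z k)"
    and Z_0: "(\<integral>\<omega>. Z 0 \<omega> \<partial>M) \<le> 1"
    and Z_step: "\<And>m G. m < n \<Longrightarrow> G \<in> sets (F m) \<Longrightarrow>
      (\<integral>\<omega>. Z (Suc m) \<omega> * indicator G \<omega> \<partial>M) \<le> (\<integral>\<omega>. Z m \<omega> * indicator G \<omega> \<partial>M)"
begin

definition stays_below :: "nat \<Rightarrow> 'a set" where
  "stays_below m = {\<omega> \<in> space M. \<forall>j\<in>{1..m}. Z j \<omega> < c}"

text \<open>The expectation of Z stopped at the first time it reaches c, with the value at that time
replaced by c.\<close>

definition stopped_expectation :: "nat \<Rightarrow> real" where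
  "stopped_expectation m = (\<integral>\<omega>. c * indicator (space M - stays_below m) \<omega>
    + Z m \<omega> * indicator (stays_below m) \<omega> \<partial>M)"

lemma stays_below_sets: "m \<le> n \<Longrightarrow> stays_below m \<in> sets (F m)"
proof -
  assume m: "m \<le> n"
  have "Measurable.pred (F m) (\<lambda>\<omega>. \<forall>j\<in>{1..m}. Z j \<omega> < c)"
  proof (rule pred_intros_finite)
    fix j
    assume "j \<in> {1..m}"
    then have [measurable]: "Z j \<in> borel_measurable (F m)"
      using measurable_filtration_mono[OF _ m adapted_Z[of j]] m by auto
    show "Measurable.pred (F m) (\<lambda>\<omega>. Z j \<omega> < c)"
      by measurable
  qed simp
  then show ?thesis
    unfolding stays_below_def pred_def using space_filtration[OF m] by simp
qed

lemma stays_below_sets_M: "m \<le> n \<Longrightarrow> stays_below m \<in> sets M"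
  using sets_from_filtration stays_below_sets by blast

lemma integrable_mult_indicator_Z:
  assumes "A \<in> sets M"
  shows "integrable M (\<lambda>\<omega>. c * indicator A \<omega>)"
    and "m \<le> n \<Longrightarrow> integrable M (\<lambda>\<omega>. Z m \<omega> * indicator A \<omega>)"
  using assms integrable_Z by (intro integrable_real_mult_indicator; simp)+

lemma stopped_expectation_Suc_le: "m < n \<Longrightarrow> stopped_expectation (Suc m) \<le> stopped_expectation m"
proof -
  assume m: "m < n"
  note integrable = integrable_mult_indicator_Z stays_below_sets_M
  have "c * indicator (space M - stays_below (Suc m)) \<omega> + Z (Suc m) \<omega> * indicator (stays_below (Suc m)) \<omega>
      \<le> c * indicator (space M - stays_below m) \<omega> + Z (Suc m) \<omega> * indicator (stays_below m) \<omega>" for \<omega>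
    using Z_nonneg[of "Suc m" \<omega>] by (auto simp: stays_below_def indicator_def le_Suc_eq not_less)
  then have "stopped_expectation (Suc m)
      \<le> (\<integral>\<omega>. c * indicator (space M - stays_below m) \<omega> + Z (Suc m) \<omega> * indicator (stays_below m) \<omega> \<partial>M)"
    unfolding stopped_expectation_def using m integrable by (intro integral_mono) auto
  also have "\<dots> \<le> stopped_expectation m"
    unfolding stopped_expectation_def
    using m integrable Z_step[OF m stays_below_sets] by simp
  finally show ?thesis .
qed

lemma stopped_expectation_le_1: "m \<le> n \<Longrightarrow> stopped_expectation m \<le> 1"
proof (induction m)
  case 0
  have "(\<integral>\<omega>. Z 0 \<omega> * indicator (space M) \<omega> \<partial>M) = (\<integral>\<omega>. Z 0 \<omega> \<partial>M)"
    by (rule Bochner_Integration.integral_cong) auto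
  then show ?case
    using Z_0 by (simp add: stopped_expectation_def stays_below_def)
next
  case (Suc m)
  then show ?case
    using stopped_expectation_Suc_le[of m] by simp
qed

lemma supermartingale_maximal_inequality:
  "c * measure M {\<omega> \<in> space M. \<exists>k\<in>{1..n}. c \<le> Z k \<omega>} \<le> 1"
proof -
  have [measurable]: "stays_below n \<in> sets M"
    using stays_below_sets_M by simp
  have "{\<omega> \<in> space M. \<exists>k\<in>{1..n}. c \<le> Z k \<omega>} = space M - stays_below n"
    by (auto simp: stays_below_def not_less)
  then have "c * measure M {\<omega> \<in> space M. \<exists>k\<in>{1..n}. c \<le> Z k \<omega>}
      = (\<integral>\<omega>. c * indicator (space M - stays_below n) \<omega> \<partial>M)"
    by simp
  also have "\<dots> \<le> stopped_expectation n"
    unfolding stopped_expectation_def using integrable_mult_indicator_Z Z_nonneg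
    by (intro integral_mono Bochner_Integration.integrable_add) auto
  also have "\<dots> \<le> 1"
    by (rule stopped_expectation_le_1) simp
  finally show ?thesis .
qed

end

context
  fixes lam y g :: real
  assumes lam: "lam > 0" and y: "y > 0" and g: "g \<ge> 0"
    and exp_le: "\<And>t. t \<le> y \<Longrightarrow> exp (lam * t) \<le> 1 + lam * t + g * t\<^sup>2"
begin

definition \<xi>_trunc :: "nat \<Rightarrow> 'a \<Rightarrow> real" where
  "\<xi>_trunc i = (\<lambda>\<omega>. if \<xi> i \<omega> \<le> y then \<xi> i \<omega> else 0)"

text \<open>Since cond_var is nonnegative only almost everywhere, its positive part is used; this keeps
the process bounded everywhere.\<close>

definition exp_supermartingale :: "nat \<Rightarrow> 'a \<Rightarrow> real" where
  "exp_supermartingale k =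
    (\<lambda>\<omega>. exp (\<Sum>i=1..k. lam * \<xi>_trunc i \<omega> - g * max 0 (cond_var i \<omega>)))"

lemma exp_supermartingale_measurable: "k \<le> n \<Longrightarrow> exp_supermartingale k \<in> borel_measurable (F k)"
proof -
  assume k: "k \<le> n"
  have "(\<lambda>\<omega>. lam * \<xi>_trunc i \<omega> - g * max 0 (cond_var i \<omega>)) \<in> borel_measurable (F k)"
    if i: "i \<in> {1..k}" for i
  proof -
    have [measurable]: "\<xi> i \<in> borel_measurable (F k)"
      using measurable_filtration_mono[OF _ k adapted[of i]] i k by auto
    have [measurable]: "cond_var i \<in> borel_measurable (F k)"
      using measurable_filtration_mono[OF _ k cond_var_measurable[of i]] i by auto
    show ?thesis
      unfolding \<xi>_trunc_def by measurable
  qed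
  then have [measurable]:
    "(\<lambda>\<omega>. \<Sum>i=1..k. lam * \<xi>_trunc i \<omega> - g * max 0 (cond_var i \<omega>)) \<in> borel_measurable (F k)"
    by (rule borel_measurable_sum)
  show ?thesis
    unfolding exp_supermartingale_def by measurable
qed

lemma exp_supermartingale_pos: "0 < exp_supermartingale k \<omega>"
  by (simp add: exp_supermartingale_def)

lemma exp_supermartingale_le: "exp_supermartingale k \<omega> \<le> exp (real k * (lam * y))"
proof -
  have "lam * \<xi>_trunc i \<omega> - g * max 0 (cond_var i \<omega>) \<le> lam * y" for i
  proof -
    have "lam * \<xi>_trunc i \<omega> \<le> lam * y"
      using lam y by (simp add: \<xi>_trunc_def)
    moreover have "0 \<le> g * max 0 (cond_var i \<omega>)"
      using g by simp
    ultimately show ?thesis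
      by linarith
  qed
  then have "(\<Sum>i=1..k. lam * \<xi>_trunc i \<omega> - g * max 0 (cond_var i \<omega>)) \<le> real k * (lam * y)"
    using sum_bounded_above[of "{1..k}" "\<lambda>i. lam * \<xi>_trunc i \<omega> - g * max 0 (cond_var i \<omega>)" "lam * y"]
    by simp
  then show ?thesis
    by (simp add: exp_supermartingale_def)
qed

lemma integrable_exp_supermartingale: "k \<le> n \<Longrightarrow> integrable M (exp_supermartingale k)"
  using measurable_from_filtration[OF _ exp_supermartingale_measurable] exp_supermartingale_le
    exp_supermartingale_pos
  by (intro integrable_const_bound[where B = "exp (real k * (lam * y))"]) (auto simp: less_imp_le)

lemma exp_supermartingale_Suc:
  "exp_supermartingale (Suc m) \<omega>
    = exp_supermartingale m \<omega> * exp (lam * \<xi>_trunc (Suc m) \<omega>) * exp (- g * max 0 (cond_var (Suc m) \<omega>))"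
  by (simp add: exp_supermartingale_def mult_exp_exp algebra_simps)

lemma exp_\<xi>_trunc_le: "exp (lam * \<xi>_trunc i \<omega>) \<le> 1 + lam * \<xi> i \<omega> + g * (\<xi> i \<omega>)\<^sup>2"
proof (cases "\<xi> i \<omega> \<le> y")
  case True
  then show ?thesis
    using exp_le[of "\<xi> i \<omega>"] by (simp add: \<xi>_trunc_def)
next
  case False
  then have "\<xi> i \<omega> > 0"
    using y by auto
  then show ?thesis
    using False lam g by (simp add: \<xi>_trunc_def)
qed

lemma exp_supermartingale_step:
  assumes m: "m < n" and G: "G \<in> sets (F m)"
  shows "(\<integral>\<omega>. exp_supermartingale (Suc m) \<omega> * indicator G \<omega> \<partial>M)
    \<le> (\<integral>\<omega>. exp_supermartingale m \<omega> * indicator G \<omega> \<partial>M)"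
proof -
  define d where "d \<omega> = max 0 (cond_var (Suc m) \<omega>)" for \<omega>
  define h where "h \<omega> = exp_supermartingale m \<omega> * indicator G \<omega> * exp (- g * d \<omega>)" for \<omega>
  have [measurable]: "exp_supermartingale m \<in> borel_measurable (F m)"
    "cond_var (Suc m) \<in> borel_measurable (F m)" "G \<in> sets (F m)"
    using exp_supermartingale_measurable[of m] cond_var_measurable[of "Suc m"] m G by auto
  have h_meas: "h \<in> borel_measurable (F m)"
    unfolding h_def d_def by measurable
  have h_nonneg: "0 \<le> h \<omega>" for \<omega>
    using exp_supermartingale_pos[of m \<omega>] by (simp add: h_def)
  have h_le: "h \<omega> \<le> exp_supermartingale m \<omega>" for \<omega>
    using exp_supermartingale_pos[of m \<omega>] g
    by (auto simp: h_def d_def indicator_def mult_le_cancel_left1)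
  have h_abs: "\<bar>h \<omega>\<bar> \<le> exp (real m * (lam * y))" for \<omega>
    unfolding abs_of_nonneg[OF h_nonneg]
    using h_le[of \<omega>] exp_supermartingale_le[of m \<omega>] by linarith
  have GM: "G \<in> sets M"
    using sets_from_filtration[OF _ G] m by simp
  have Z_Suc: "exp_supermartingale (Suc m) \<omega> * indicator G \<omega> = h \<omega> * exp (lam * \<xi>_trunc (Suc m) \<omega>)"
    for \<omega>
    by (simp add: h_def d_def exp_supermartingale_Suc)
  have Z_m: "exp_supermartingale m \<omega> * indicator G \<omega> = h \<omega> * exp (g * d \<omega>)" for \<omega>
    by (simp add: h_def exp_minus field_simps)
  have int_Z: "integrable M (\<lambda>\<omega>. exp_supermartingale k \<omega> * indicator G \<omega>)" if "k \<le> n" for k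
    using integrable_real_mult_indicator[OF GM integrable_exp_supermartingale[OF that]] .
  have int_h: "integrable M (\<lambda>\<omega>. h \<omega> * f \<omega>)" if "integrable M f" for f
    using that h_abs measurable_from_filtration[OF _ h_meas] m by (intro integrable_bounded_mult) auto
  have "(\<integral>\<omega>. exp_supermartingale (Suc m) \<omega> * indicator G \<omega> \<partial>M)
      \<le> (\<integral>\<omega>. h \<omega> * (1 + lam * \<xi> (Suc m) \<omega> + g * (\<xi> (Suc m) \<omega>)\<^sup>2) \<partial>M)"
    using int_Z[of "Suc m"] m h_nonneg exp_\<xi>_trunc_le
      integrable_\<xi>[of "Suc m"] integrable_\<xi>_square[of "Suc m"]
    by (intro integral_mono int_h) (auto simp: Z_Suc intro: mult_left_mono)
  also have "\<dots> = (\<integral>\<omega>. h \<omega> * (1 + g * cond_var (Suc m) \<omega>) \<partial>M)"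
    using integral_mult_quadratic_\<xi>_Suc[OF m h_meas] h_abs by blast
  also have "\<dots> \<le> (\<integral>\<omega>. h \<omega> * exp (g * d \<omega>) \<partial>M)"
  proof (rule integral_mono[OF int_h])
    show "integrable M (\<lambda>\<omega>. h \<omega> * exp (g * d \<omega>))"
      using int_Z[of m] m by (simp add: Z_m)
  qed (use m h_nonneg integrable_cond_var[of "Suc m"] one_add_mult_le_exp_max[OF g] in
      \<open>auto simp: d_def intro: mult_left_mono\<close>)
  also have "\<dots> = (\<integral>\<omega>. exp_supermartingale m \<omega> * indicator G \<omega> \<partial>M)"
    by (simp add: Z_m)
  finally show ?thesis .
qed

lemma exp_supermartingale_ge:
  assumes nonneg: "\<forall>i\<in>{1..n}. 0 \<le> cond_var i \<omega>" and below: "\<forall>i\<in>{1..n}. \<xi> i \<omega> \<le> y"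
    and QV: "(\<Sum>i=1..n. cond_var i \<omega>) \<le> V"
    and k: "k \<in> {1..n}" "x \<le> (\<Sum>i=1..k. \<xi> i \<omega>)"
  shows "exp (lam * x - g * V) \<le> exp_supermartingale k \<omega>"
proof -
  have "(\<Sum>i=1..k. cond_var i \<omega>) \<le> (\<Sum>i=1..n. cond_var i \<omega>)"
    using k nonneg by (intro sum_mono2) auto
  then have "lam * x - g * V \<le> lam * (\<Sum>i=1..k. \<xi> i \<omega>) - g * (\<Sum>i=1..k. cond_var i \<omega>)"
    using k QV lam g by (intro diff_mono mult_left_mono) auto
  also have "\<dots> = (\<Sum>i=1..k. lam * \<xi>_trunc i \<omega> - g * max 0 (cond_var i \<omega>))"
    unfolding sum_distrib_left sum_subtractf[symmetric]
    by (rule sum.cong) (use k below nonneg in \<open>auto simp: \<xi>_trunc_def\<close>)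
  finally show ?thesis
    by (simp add: exp_supermartingale_def)
qed

lemma Freedman_inequality: "measure M (Freedman_event x y V) \<le> exp (- (lam * x - g * V))"
proof -
  define c where "c = exp (lam * x - g * V)"
  define A where "A = {\<omega> \<in> space M. \<exists>k\<in>{1..n}. c \<le> exp_supermartingale k \<omega>}"
  have c: "c > 0"
    by (simp add: c_def)
  have "(\<integral>\<omega>. exp_supermartingale 0 \<omega> \<partial>M) \<le> 1"
    by (simp add: exp_supermartingale_def)
  then have maximal: "c * measure M A \<le> 1"
    unfolding A_def
    using c exp_supermartingale_measurable integrable_exp_supermartingale exp_supermartingale_step
    by (intro supermartingale_maximal_inequality) (auto intro: less_imp_le exp_supermartingale_pos)
  have "Measurable.pred M (\<lambda>\<omega>. \<exists>k\<in>{1..n}. c \<le> exp_supermartingale k \<omega>)"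
    using integrable_exp_supermartingale by (intro pred_intros_finite) auto
  then have "A \<in> sets M"
    unfolding A_def pred_def by simp
  have "AE \<omega> in M. \<forall>i\<in>{1..n}. 0 \<le> cond_var i \<omega>"
    using AE_cond_var_nonneg by (intro AE_finite_allI) auto
  then have "AE \<omega> in M. \<omega> \<in> Freedman_event x y V \<longrightarrow> \<omega> \<in> A"
    by (rule AE_mp) (auto simp: A_def c_def Freedman_event_def intro!: AE_I2 exp_supermartingale_ge)
  then have "measure M (Freedman_event x y V) \<le> measure M A"
    using \<open>A \<in> sets M\<close> by (rule finite_measure_mono_AE)
  also have "\<dots> \<le> 1 / c"
    using maximal c by (simp add: field_simps)
  also have "\<dots> = exp (- (lam * x - g * V))"
    unfolding c_def exp_minus by (simp add: inverse_eq_divide)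
  finally show ?thesis .
qed

end

lemma Freedman_Bernstein_inequality:
  assumes x: "x > 0" and y: "y > 0" and V: "V > 0"
  shows "measure M (Freedman_event x y V) \<le> exp (- (x\<^sup>2 / (2 * (V + x * y / 3))))"
proof -
  obtain lam g where lam: "lam > 0" and g: "g \<ge> 0"
    and exp_le: "\<And>t. t \<le> y \<Longrightarrow> exp (lam * t) \<le> 1 + lam * t + g * t\<^sup>2"
    and exponent: "lam * x - g * V = x\<^sup>2 / (2 * (V + x * y / 3))"
    using Bernstein_exponent[OF x y V] by blast
  show ?thesis
    using Freedman_inequality[OF lam y g exp_le, of x V] unfolding exponent .
qed

lemma max_partial_sum_tail_le:
  assumes n: "n \<ge> 1" and x: "x > 0" and y: "y > 0" and V: "V > 0"
  shows "measure M {\<omega> \<in> space M. x \<le> Max ((\<lambda>k. \<Sum>i=1..k. \<xi> i \<omega>) ` {1..n})}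
    \<le> exp (- (x\<^sup>2 / (2 * (V + x * y / 3))))
      + (\<Sum>i=1..n. measure M {\<omega> \<in> space M. y < \<xi> i \<omega>})
      + measure M {\<omega> \<in> space M. V < (\<Sum>i=1..n. cond_var i \<omega>)}"
proof -
  define T where "T = Freedman_event x y V"
  define B where "B i = {\<omega> \<in> space M. y < \<xi> i \<omega>}" for i
  define C where "C = {\<omega> \<in> space M. V < (\<Sum>i=1..n. cond_var i \<omega>)}"
  have T_sets: "T \<in> sets M"
    unfolding T_def by (rule sets_Freedman_event)
  have B_sets: "B i \<in> sets M" if "i \<in> {1..n}" for i
  proof -
    have [measurable]: "\<xi> i \<in> borel_measurable M"
      using borel_measurable_\<xi> that by simp
    show ?thesis
      unfolding B_def by measurable
  qed
  have [measurable]: "(\<lambda>\<omega>. \<Sum>i=1..n. cond_var i \<omega>) \<in> borel_measurable M"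
    by (intro borel_measurable_sum) (auto intro: borel_measurable_cond_var)
  then have C_sets: "C \<in> sets M"
    unfolding C_def by measurable
  have "{\<omega> \<in> space M. x \<le> Max ((\<lambda>k. \<Sum>i=1..k. \<xi> i \<omega>) ` {1..n})} \<subseteq> T \<union> (\<Union>i\<in>{1..n}. B i) \<union> C"
  proof
    fix \<omega>
    assume "\<omega> \<in> {\<omega> \<in> space M. x \<le> Max ((\<lambda>k. \<Sum>i=1..k. \<xi> i \<omega>) ` {1..n})}"
    then obtain k where "\<omega> \<in> space M" "k \<in> {1..n}" "x \<le> (\<Sum>i=1..k. \<xi> i \<omega>)"
      using n by (auto simp: Max_ge_iff)
    then show "\<omega> \<in> T \<union> (\<Union>i\<in>{1..n}. B i) \<union> C"
      unfolding T_def B_def C_def Freedman_event_def by (auto simp: not_less)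
  qed
  then have "measure M {\<omega> \<in> space M. x \<le> Max ((\<lambda>k. \<Sum>i=1..k. \<xi> i \<omega>) ` {1..n})}
      \<le> measure M (T \<union> (\<Union>i\<in>{1..n}. B i) \<union> C)"
    by (rule finite_measure_mono) (use T_sets B_sets C_sets in auto)
  also have "\<dots> \<le> measure M (T \<union> (\<Union>i\<in>{1..n}. B i)) + measure M C"
    by (rule measure_Un_le) (use T_sets B_sets C_sets in auto)
  also have "measure M (T \<union> (\<Union>i\<in>{1..n}. B i)) \<le> measure M T + measure M (\<Union>i\<in>{1..n}. B i)"
    by (rule measure_Un_le) (use T_sets B_sets in auto)
  also have "measure M (\<Union>i\<in>{1..n}. B i) \<le> (\<Sum>i=1..n. measure M (B i))"
    by (rule measure_UNION_le) (use B_sets in auto)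
  finally show ?thesis
    using Freedman_Bernstein_inequality[OF x y V] unfolding T_def B_def C_def by linarith
qed

lemma measure_cond_var_sum_gt_le:
  assumes n: "n \<ge> 1" and v: "v > 0" and q: "q > 0"
    and moment: "integrable M (\<lambda>\<omega>. \<bar>(\<Sum>i=1..n. cond_var i \<omega>) / real n\<bar> powr q)"
  shows "measure M {\<omega> \<in> space M. real n * v\<^sup>2 < (\<Sum>i=1..n. cond_var i \<omega>)}
    \<le> (\<integral>\<omega>. \<bar>(\<Sum>i=1..n. cond_var i \<omega>) / real n\<bar> powr q \<partial>M) / v powr (2 * q)"
proof -
  have mean_meas[measurable]: "(\<lambda>\<omega>. (\<Sum>i=1..n. cond_var i \<omega>) / real n) \<in> borel_measurable M"
    by (intro borel_measurable_divide borel_measurable_sum) (auto intro: borel_measurable_cond_var)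
  have "{\<omega> \<in> space M. real n * v\<^sup>2 < (\<Sum>i=1..n. cond_var i \<omega>)}
      \<subseteq> {\<omega> \<in> space M. v\<^sup>2 \<le> (\<Sum>i=1..n. cond_var i \<omega>) / real n}"
    using n by (auto simp: field_simps)
  then have "measure M {\<omega> \<in> space M. real n * v\<^sup>2 < (\<Sum>i=1..n. cond_var i \<omega>)}
      \<le> measure M {\<omega> \<in> space M. v\<^sup>2 \<le> (\<Sum>i=1..n. cond_var i \<omega>) / real n}"
    by (rule finite_measure_mono) measurable
  also have "\<dots> \<le> (\<integral>\<omega>. \<bar>(\<Sum>i=1..n. cond_var i \<omega>) / real n\<bar> powr q \<partial>M) / (v\<^sup>2) powr q"
    by (rule measure_ge_le_abs_powr_integral[OF mean_meas _ q moment]) (use v in simp)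
  also have "(v\<^sup>2) powr q = v powr (2 * q)"
    using abs_power2_powr[of v q] v by simp
  finally show ?thesis .
qed

lemma max_partial_sum_moment_tail_le:
  assumes n: "n \<ge> 1" and x: "x > 0" and v: "v > 0" and p\<delta>: "p + \<delta> > 0"
    and moment: "\<And>i. 1 \<le> i \<Longrightarrow> i \<le> n \<Longrightarrow> integrable M (\<lambda>\<omega>. \<bar>\<xi> i \<omega>\<bar> powr (p + \<delta>))"
    and QV_moment: "integrable M (\<lambda>\<omega>. \<bar>(\<Sum>i=1..n. cond_var i \<omega>) / real n\<bar> powr ((p + \<delta>) / 2))"
  shows "measure M {\<omega> \<in> space M. x \<le> Max ((\<lambda>k. \<Sum>i=1..k. \<xi> i \<omega>) ` {1..n})}
    \<le> exp (- (x\<^sup>2 / (2 * (real n * v\<^sup>2 + (1/3) * x powr ((2*p + \<delta>) / (p + \<delta>))))))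
      + (1 / x powr p) * (\<Sum>i=1..n. \<integral>\<omega>.
          \<bar>\<xi> i \<omega>\<bar> powr (p + \<delta>) * indicator {\<omega>'. \<xi> i \<omega>' > x powr (p / (p + \<delta>))} \<omega> \<partial>M)
      + (1 / v powr (p + \<delta>)) * (\<integral>\<omega>. \<bar>(\<Sum>i=1..n. cond_var i \<omega>) / real n\<bar> powr ((p + \<delta>) / 2) \<partial>M)"
proof -
  have two_q: "2 * ((p + \<delta>) / 2) = p + \<delta>"
    by simp
  define y where "y = x powr (p / (p + \<delta>))"
  have y: "y > 0"
    using x by (simp add: y_def)
  have "(2 * p + \<delta>) / (p + \<delta>) = 1 + p / (p + \<delta>)"
    using p\<delta> by (simp add: field_simps)
  then have xy: "(1/3) * x powr ((2 * p + \<delta>) / (p + \<delta>)) = x * y / 3"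
    using x by (simp add: y_def powr_add)
  have "y powr (p + \<delta>) = x powr p"
    using p\<delta> by (simp add: y_def powr_powr)
  then have "measure M {\<omega> \<in> space M. y < \<xi> i \<omega>}
      \<le> (1 / x powr p) * (\<integral>\<omega>. \<bar>\<xi> i \<omega>\<bar> powr (p + \<delta>) * indicator {\<omega>'. \<xi> i \<omega>' > y} \<omega> \<partial>M)"
    if "i \<in> {1..n}" for i
    using measure_gt_le_tail_moment[OF borel_measurable_\<xi> y p\<delta> moment] that by simp
  then have "(\<Sum>i=1..n. measure M {\<omega> \<in> space M. y < \<xi> i \<omega>})
      \<le> (1 / x powr p) * (\<Sum>i=1..n. \<integral>\<omega>. \<bar>\<xi> i \<omega>\<bar> powr (p + \<delta>) * indicator {\<omega>'. \<xi> i \<omega>' > y} \<omega> \<partial>M)"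
    unfolding sum_distrib_left by (rule sum_mono)
  moreover have "measure M {\<omega> \<in> space M. real n * v\<^sup>2 < (\<Sum>i=1..n. cond_var i \<omega>)}
      \<le> (1 / v powr (p + \<delta>)) * (\<integral>\<omega>. \<bar>(\<Sum>i=1..n. cond_var i \<omega>) / real n\<bar> powr ((p + \<delta>) / 2) \<partial>M)"
    using measure_cond_var_sum_gt_le[OF n v _ QV_moment, unfolded two_q] p\<delta> by simp
  moreover have "real n * v\<^sup>2 > 0"
    using n v by simp
  ultimately show ?thesis
    using max_partial_sum_tail_le[OF n x y, of "real n * v\<^sup>2"] unfolding xy y_def[symmetric] by linarith
qed

end

theorem corollary2p3:
  fixes M :: "'a measure" and F :: "nat \<Rightarrow> 'a measure"
    and \<xi> :: "nat \<Rightarrow> 'a \<Rightarrow> real" and n :: nat and p \<delta> :: real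
  assumes prob: "prob_space M"
    and n: "n \<ge> 1"
    and subalg: "\<And>i. i \<le> n \<Longrightarrow> subalgebra M (F i)"
    and F0: "sets (F 0) = {{}, space M}"
    and mono: "\<And>i. i < n \<Longrightarrow> sets (F i) \<subseteq> sets (F (Suc i))"
    and xi0: "\<xi> 0 = (\<lambda>\<omega>. 0)"
    and adapted: "\<And>i. i \<le> n \<Longrightarrow> \<xi> i \<in> borel_measurable (F i)"
    and integ: "\<And>i. i \<le> n \<Longrightarrow> integrable M (\<xi> i)"
    and mds: "\<And>i. 1 \<le> i \<Longrightarrow> i \<le> n \<Longrightarrow>
               AE \<omega> in M. real_cond_exp M (F (i - 1)) (\<xi> i) \<omega> = 0"
    and p: "p \<ge> 2" and \<delta>: "\<delta> > 0"
    and moment: "\<And>i. 1 \<le> i \<Longrightarrow> i \<le> n \<Longrightarrow>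
               integrable M (\<lambda>\<omega>. \<bar>\<xi> i \<omega>\<bar> powr (p + \<delta>))"
  defines "S \<equiv> (\<lambda>k \<omega>. \<Sum>i=1..k. \<xi> i \<omega>)"
    and "QV \<equiv> (\<lambda>\<omega>. \<Sum>i=1..n. real_cond_exp M (F (i - 1)) (\<lambda>\<omega>'. (\<xi> i \<omega>')\<^sup>2) \<omega>)"
  shows "(\<forall>x>0. \<forall>v>0.
           measure M {\<omega> \<in> space M. Max ((\<lambda>k. S k \<omega>) ` {1..n}) \<ge> x}
             \<le> exp (- (x\<^sup>2 / (2 * (real n * v\<^sup>2 + (1/3) * x powr ((2*p + \<delta>) / (p + \<delta>))))))
               + (1 / x powr p) * (\<Sum>i=1..n. integral\<^sup>L M (\<lambda>\<omega>.
                    \<bar>\<xi> i \<omega>\<bar> powr (p + \<delta>) * indicator {\<omega>'. \<xi> i \<omega>' > x powr (p / (p + \<delta>))} \<omega>))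
               + (1 / v powr (p + \<delta>)) * integral\<^sup>L M (\<lambda>\<omega>. \<bar>QV \<omega> / real n\<bar> powr ((p + \<delta>) / 2)))
         \<and> integral\<^sup>L M (\<lambda>\<omega>. \<bar>QV \<omega> / real n\<bar> powr ((p + \<delta>) / 2))
           \<le> (1 / real n) * (\<Sum>i=1..n. integral\<^sup>L M (\<lambda>\<omega>. \<bar>\<xi> i \<omega>\<bar> powr (p + \<delta>)))"
proof -
  interpret prob_space M
    by (rule prob)
  have \<xi>_meas: "\<xi> i \<in> borel_measurable M" if "i \<le> n" for i
    using measurable_from_subalg[OF subalg adapted] that by blast
  have "integrable M (\<lambda>\<omega>. (\<xi> i \<omega>)\<^sup>2)" if "1 \<le> i" "i \<le> n" for i
    using integrable_power2_if_integrable_abs_powr[OF \<xi>_meas _ moment] that p \<delta> by auto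
  then interpret martingale_difference_sequence M F \<xi> n
    by unfold_locales (use subalg mono adapted integ mds in auto)
  have q: "(p + \<delta>) / 2 \<ge> 1"
    using p \<delta> by simp
  have two_q: "2 * ((p + \<delta>) / 2) = p + \<delta>"
    by simp
  have moment_q: "integrable M (\<lambda>\<omega>. \<bar>\<xi> i \<omega>\<bar> powr (2 * ((p + \<delta>) / 2)))" if "1 \<le> i" "i \<le> n" for i
    unfolding two_q using moment[OF that] .
  have QV_eq: "QV = (\<lambda>\<omega>. \<Sum>i=1..n. cond_var i \<omega>)"
    unfolding QV_def cond_var_def ..
  show ?thesis
    unfolding S_def QV_eq
    using max_partial_sum_moment_tail_le[OF n _ _ _ moment integrable_cond_var_mean_powr[OF n q moment_q]]
      integral_cond_var_mean_powr_le[OF n q moment_q, unfolded two_q] p \<delta>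
    by auto
qed

end
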